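(* Let $H=\langle a_1,\dots,a_\ell\rangle$ with $\ell\ge3$ and $a_j\notin\langle a_1,\dots,\widehat{a_j},\dots,a_\ell\rangle$ for all $j$, and let $R=k[[H]]$. Assume $\mathrm r(R)=2$, so that $\mathrm{PF}(H)=\{c,f\}$ with $c<f$, and put $a=f-c>0$, so that the fractional canonical ideal is $K=R+Rt^a$. Then $R$ is a $2$-AGL ring if and only if $3a\in H$ and $f=2a+a_i$ for some $1\le i\le\ell$.
   Context: $k$ is a field, $V=k[[t]]$. For positive integers $a_1,\dots,a_\ell$ with $\gcd=1$, $H=\langle a_1,\dots,a_\ell\rangle=\{\sum c_ia_i: c_i\in\mathbb Z_{\ge0}\}$ is a numerical semigroup and $R=k[[H]]=k[[t^{a_1},\dots,t^{a_\ell}]]\subseteq V$, a one-dimensional Cohen–Macaulay local domain. $f=\mathrm f(H)=\max(\mathbb Z\setminus H)$ is the Frobenius number, $\mathrm{PF}(H)=\{n\in\mathbb Z\setminus H: n+a_i\in H \text{ for all } i\}$ the pseudo-Frobenius numbers; $\mathrm r(R)=\#\mathrm{PF}(H)$. The fractional canonical ideal is $K=\sum_{c\in\mathrm{PF}(H)}Rt^{f-c}$; $K\cong\mathrm K_R$, $R\subseteq K\subseteq V$. With $S=R[K]$, $R$ is $2$-AGL iff $\ell_R(S/K)=2$ (equivalently, the Sally module of a canonical ideal $t^NK\subseteq R$ with respect to the reduction $(t^N)$ has rank $2$). *)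

theory Defs
  imports Main
begin

inductive_set gen_monoid :: "int set \<Rightarrow> int set" for A :: "int set" where
  zero: "0 \<in> gen_monoid A"
| add: "x \<in> gen_monoid A \<Longrightarrow> y \<in> A \<Longrightarrow> x + y \<in> gen_monoid A"

definition sgp :: "nat list \<Rightarrow> int set" where
  "sgp as = gen_monoid (int ` set as)"

definition PF :: "nat list \<Rightarrow> int set" where
  "PF as = {n. n \<notin> sgp as \<and> (\<forall>i<length as. n + int (as ! i) \<in> sgp as)}"

definition frob :: "nat list \<Rightarrow> int" where
  "frob as = (GREATEST n. n \<notin> sgp as)"

text \<open>Value set (set of exponents of monomials) of the fractional canonical ideal
  K = sum over c in PF(H) of R t^(f-c).\<close>
definition Kvals :: "nat list \<Rightarrow> int set" where
  "Kvals as = (\<Union>c\<in>PF as. (\<lambda>h. frob as - c + h) ` sgp as)"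

text \<open>Value set of S = R[K] = union of the powers K^n: all finite sums of
  elements of the value set of K.\<close>
definition Svals :: "nat list \<Rightarrow> int set" where
  "Svals as = gen_monoid (Kvals as)"

text \<open>R = k[[H]] is 2-AGL iff length_R(S/K) = 2; since S and K are monomial
  modules, length_R(S/K) = dim_k(S/K) = number of exponents of S not in K.\<close>
definition two_AGL :: "nat list \<Rightarrow> bool" where
  "two_AGL as \<longleftrightarrow> card (Svals as - Kvals as) = 2"

end

theory Submission
  imports Defs
begin

text \<open>Write H for the semigroup, f for its Frobenius number and a = f - c. Since PF(H) = {c, f},
  the value set of K is H \<union> (a + H), and it consists exactly of the x with f - x \<notin> H.
  Sums of elements of K only leave K through multiples of a: if 2a \<in> H then S = K, and if
  3a \<in> H then S \<subseteq> H \<union> (a + H) \<union> (2a + H), so that S \<setminus> K = 2a + {h \<in> H. f - 2a - h \<in> H}.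
  This set has exactly two elements iff f - 2a is an atom of H, i.e. a generator a_i.
  Conversely, if S \<setminus> K = {x, y}, then 2a \<notin> H (else S = K), which puts 2a and f into S \<setminus> K,
  forces f - 2a to be a nonzero atom, and excludes 3a \<notin> H, as 3a would be a third element.\<close>

lemma card_2_eq_doubleton:
  assumes "card S = 2" "x \<in> S" "y \<in> S" "x \<noteq> y"
  shows "S = {x, y}"
proof -
  have "finite S" using assms(1) by (simp add: card_ge_0_finite)
  moreover have "{x, y} \<subseteq> S" "card {x, y} = card S" using assms by simp_all
  ultimately show ?thesis by (metis card_subset_eq)
qed

lemma int_bounded_greatest:
  fixes P :: "int \<Rightarrow> bool"
  assumes "P k" and bounded: "\<And>z. P z \<Longrightarrow> z \<le> N"
  obtains m where "P m" "\<And>z. P z \<Longrightarrow> z \<le> m"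
proof
  let ?A = "{z \<in> {k..N}. P z}"
  have fin: "finite ?A" by (rule finite_subset[of _ "{k..N}"]) auto
  have k: "k \<in> ?A" using assms by auto
  show "P (Max ?A)" using Max_in[OF fin] k by blast
  show "z \<le> Max ?A" if "P z" for z
  proof (cases "k \<le> z")
    case True
    then have "z \<in> ?A" using that bounded by auto
    then show ?thesis using fin by simp
  next
    case False
    then show ?thesis using Max_ge[OF fin k] by simp
  qed
qed

lemma gen_monoid_base: "x \<in> A \<Longrightarrow> x \<in> gen_monoid A"
  using gen_monoid.add[OF gen_monoid.zero] by fastforce

lemma gen_monoid_add:
  assumes "x \<in> gen_monoid A" "y \<in> gen_monoid A"
  shows "x + y \<in> gen_monoid A"
  using assms(2)
proof (induction y rule: gen_monoid.induct)
  case (add y z)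
  then have "(x + y) + z \<in> gen_monoid A" by (blast intro: gen_monoid.add)
  then show ?case by (simp add: add.assoc)
qed (simp add: assms(1))

lemma gen_monoid_mult:
  assumes "x \<in> gen_monoid A" "0 \<le> k"
  shows "k * x \<in> gen_monoid A"
  using assms(2)
proof (induction k rule: int_ge_induct)
  case base then show ?case by (simp add: gen_monoid.zero)
next
  case (step k) then show ?case by (simp add: distrib_right gen_monoid_add assms(1))
qed

lemma gen_monoid_least:
  assumes "0 \<in> B" "A \<subseteq> B" "\<And>x y. x \<in> B \<Longrightarrow> y \<in> B \<Longrightarrow> x + y \<in> B"
  shows "gen_monoid A \<subseteq> B"
proof
  show "x \<in> B" if "x \<in> gen_monoid A" for x
    using that by induction (use assms in auto)
qed

lemma gen_monoid_nonneg: "x \<in> gen_monoid A \<Longrightarrow> (\<And>a. a \<in> A \<Longrightarrow> 0 \<le> a) \<Longrightarrow> 0 \<le> x"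
  by (induction rule: gen_monoid.induct) auto

lemma gen_monoid_nonzero_split:
  assumes "x \<in> gen_monoid A" "x \<noteq> 0"
  obtains y a where "y \<in> gen_monoid A" "a \<in> A" "x = y + a"
  using assms by (cases rule: gen_monoid.cases) auto

lemma gen_monoid_mult_diff:
  assumes "u \<in> gen_monoid A" "v \<in> gen_monoid A"
  shows "\<exists>u'\<in>gen_monoid A. \<exists>v'\<in>gen_monoid A. k * (u - v) = u' - v'"
proof (cases "0 \<le> k")
  case True
  then show ?thesis
    using assms
    by (intro bexI[of _ "k * u"] bexI[of _ "k * v"]) (auto simp: right_diff_distrib gen_monoid_mult)
next
  case False
  then have "-k * v \<in> gen_monoid A" "-k * u \<in> gen_monoid A"
    using gen_monoid_mult[OF assms(2), of "-k"] gen_monoid_mult[OF assms(1), of "-k"] by simp_all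
  moreover have "k * (u - v) = -k * v - -k * u" by (simp add: algebra_simps)
  ultimately show ?thesis by blast
qed

lemma gen_monoid_Gcd_diff:
  fixes A B :: "nat set"
  assumes "finite B" "B \<subseteq> A"
  shows "\<exists>u\<in>gen_monoid (int ` A). \<exists>v\<in>gen_monoid (int ` A). int (Gcd B) = u - v"
  using assms
proof (induction B rule: finite_induct)
  case empty
  then show ?case by (auto intro: gen_monoid.zero)
next
  case (insert x B)
  let ?M = "gen_monoid (int ` A)"
  from insert obtain u v where uv: "u \<in> ?M" "v \<in> ?M" "int (Gcd B) = u - v" by auto
  obtain p q where pq: "p * int x + q * int (Gcd B) = gcd (int x) (int (Gcd B))"
    using bezout_int by blast
  have "int x \<in> ?M" using insert.prems by (auto intro: gen_monoid_base)
  then obtain u1 v1 where 1: "u1 \<in> ?M" "v1 \<in> ?M" "p * int x = u1 - v1"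
    using gen_monoid_mult_diff[OF _ gen_monoid.zero, of "int x" "int ` A" p] by auto
  obtain u2 v2 where 2: "u2 \<in> ?M" "v2 \<in> ?M" "q * (u - v) = u2 - v2"
    using gen_monoid_mult_diff[OF uv(1,2)] by blast
  have "int (Gcd (insert x B)) = p * int x + q * int (Gcd B)"
    using pq by simp
  also have "\<dots> = (u1 + u2) - (v1 + v2)"
    using uv(3) 1(3) 2(3) by simp
  finally have "int (Gcd (insert x B)) = (u1 + u2) - (v1 + v2)" .
  then show ?case using 1 2 gen_monoid_add by blast
qed

text \<open>Write 1 = u - v with u, v in the monoid; since u > 0, every z beyond (u - 1) v is
  q u + r u + (u - 1 - r) v with 0 \<le> r < u.\<close>
lemma gen_monoid_cofinite:
  fixes A :: "nat set"
  assumes "finite A" "Gcd A = 1"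
  shows "\<exists>N. \<forall>z\<ge>N. z \<in> gen_monoid (int ` A)"
proof -
  let ?M = "gen_monoid (int ` A)"
  obtain u v where uv: "u \<in> ?M" "v \<in> ?M" "1 = u - v"
    using gen_monoid_Gcd_diff[OF assms(1) order_refl] assms(2) by auto
  have "0 \<le> v" using uv(2) by (rule gen_monoid_nonneg) auto
  then have u_pos: "0 < u" using uv(3) by simp
  show ?thesis
  proof (intro exI allI impI)
    fix z assume z: "(u - 1) * v \<le> z"
    define q where "q = (z - (u - 1) * v) div u"
    define r where "r = (z - (u - 1) * v) mod u"
    have "0 \<le> q" using z u_pos unfolding q_def by (simp add: pos_imp_zdiv_nonneg_iff)
    moreover have "0 \<le> r" "r < u" using u_pos unfolding r_def by auto
    moreover have "z = q * u + r * u + (u - 1 - r) * v"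
    proof -
      have "z = q * u + r + (u - 1) * v" unfolding q_def r_def by (simp add: mult.commute)
      also have "r = r * (u - v)" using uv(3) by simp
      finally show ?thesis by (simp add: algebra_simps)
    qed
    ultimately show "z \<in> ?M" using uv by (simp add: gen_monoid_add gen_monoid_mult)
  qed
qed

lemma sgp_zero [simp]: "0 \<in> sgp as"
  by (simp add: sgp_def gen_monoid.zero)

lemma sgp_nth: "i < length as \<Longrightarrow> int (as ! i) \<in> sgp as"
  unfolding sgp_def by (rule gen_monoid_base) auto

lemma sgp_add: "x \<in> sgp as \<Longrightarrow> y \<in> sgp as \<Longrightarrow> x + y \<in> sgp as"
  unfolding sgp_def by (rule gen_monoid_add)

lemma sgp_nonneg: "x \<in> sgp as \<Longrightarrow> 0 \<le> x"
  unfolding sgp_def by (erule gen_monoid_nonneg) auto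

lemma sgp_cofinite: "Gcd (set as) = 1 \<Longrightarrow> \<exists>N. \<forall>z\<ge>N. z \<in> sgp as"
  unfolding sgp_def by (rule gen_monoid_cofinite) auto

lemma sgp_nonzero_split:
  assumes "h \<in> sgp as" "h \<noteq> 0"
  obtains g i where "g \<in> sgp as" "i < length as" "h = g + int (as ! i)"
proof -
  obtain g a where "g \<in> sgp as" "a \<in> int ` set as" "h = g + a"
    using gen_monoid_nonzero_split assms unfolding sgp_def by blast
  then show thesis using that by (auto simp: in_set_conv_nth)
qed

lemma irreducible_in_sgp_is_nth:
  assumes pos: "\<forall>i<length as. 0 < as ! i"
    and b: "b \<in> sgp as" "b \<noteq> 0"
    and irreducible: "\<forall>h\<in>sgp as. b - h \<in> sgp as \<longrightarrow> h = 0 \<or> h = b"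
  shows "\<exists>i<length as. b = int (as ! i)"
proof -
  obtain g i where gi: "g \<in> sgp as" "i < length as" "b = g + int (as ! i)"
    using sgp_nonzero_split[OF b] .
  moreover have "b - int (as ! i) \<in> sgp as" using gi by simp
  ultimately have "int (as ! i) = 0 \<or> int (as ! i) = b"
    using irreducible sgp_nth[of i as] by blast
  then show ?thesis using gi(2) pos by auto
qed

lemma sgp_remove_nth_below:
  assumes i: "i < length as" and z: "z \<in> sgp as" "z < int (as ! i)"
  shows "z \<in> sgp (take i as @ drop (Suc i) as)"
proof -
  have set_as: "set as = insert (as ! i) (set (take i as @ drop (Suc i) as))"
    using id_take_nth_drop[OF i] by (metis list.simps(15) set_append Un_insert_right)
  from z have "z \<in> gen_monoid (int ` set as)" by (simp add: sgp_def)
  then show ?thesis using z(2)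
  proof (induction z rule: gen_monoid.induct)
    case (add x y)
    have "0 \<le> x" using add.hyps(1) by (rule gen_monoid_nonneg) auto
    moreover have "0 \<le> y" using add.hyps(2) by auto
    ultimately have "x \<in> sgp (take i as @ drop (Suc i) as)"
      and "y \<in> int ` set (take i as @ drop (Suc i) as)"
      using add set_as by auto
    then show ?case unfolding sgp_def by (rule gen_monoid.add)
  qed simp
qed

lemma minimal_nth_irreducible:
  assumes i: "i < length as"
    and minimal: "int (as ! i) \<notin> sgp (take i as @ drop (Suc i) as)"
    and h: "h \<in> sgp as" "int (as ! i) - h \<in> sgp as"
  shows "h = 0 \<or> h = int (as ! i)"
proof (rule ccontr)
  assume "\<not> (h = 0 \<or> h = int (as ! i))"
  then have "h < int (as ! i)" "int (as ! i) - h < int (as ! i)"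
    using sgp_nonneg[OF h(1)] sgp_nonneg[OF h(2)] by auto
  then have "h + (int (as ! i) - h) \<in> sgp (take i as @ drop (Suc i) as)"
    using sgp_remove_nth_below[OF i] h sgp_add by blast
  then show False using minimal by simp
qed

lemma
  assumes "Gcd (set as) = 1"
  shows frob_notin_sgp: "frob as \<notin> sgp as"
    and gt_frob_in_sgp: "frob as < z \<Longrightarrow> z \<in> sgp as"
proof -
  obtain N where N: "\<forall>z\<ge>N. z \<in> sgp as" using sgp_cofinite[OF assms] ..
  have "-1 \<notin> sgp as" using sgp_nonneg by fastforce
  moreover have "z \<notin> sgp as \<Longrightarrow> z \<le> N" for z using N by (meson linorder_le_cases)
  ultimately obtain m where m: "m \<notin> sgp as" and greatest: "\<And>z. z \<notin> sgp as \<Longrightarrow> z \<le> m"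
    using int_bounded_greatest[of "\<lambda>z. z \<notin> sgp as"] by blast
  have frob: "frob as = m" unfolding frob_def using m greatest by (rule Greatest_equality)
  show "frob as \<notin> sgp as" using m frob by simp
  show "z \<in> sgp as" if "frob as < z" using greatest[of z] that frob by fastforce
qed

lemma frob_in_PF:
  assumes pos: "\<forall>i<length as. 0 < as ! i" and gcd: "Gcd (set as) = 1"
  shows "frob as \<in> PF as"
proof -
  have "frob as + int (as ! i) \<in> sgp as" if "i < length as" for i
    using gt_frob_in_sgp[OF gcd] pos that by simp
  then show ?thesis using frob_notin_sgp[OF gcd] by (simp add: PF_def)
qed

lemma PF_plus_sgp:
  assumes "p \<in> PF as" "h \<in> sgp as" "h \<noteq> 0"
  shows "p + h \<in> sgp as"
proof -
  obtain g i where g: "g \<in> sgp as" and i: "i < length as" and h: "h = g + int (as ! i)"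
    using sgp_nonzero_split[OF assms(2,3)] .
  have "p + int (as ! i) \<in> sgp as" using assms(1) i by (simp add: PF_def)
  then have "(p + int (as ! i)) + g \<in> sgp as" using g by (rule sgp_add)
  then show ?thesis using h by (simp add: algebra_simps)
qed

text \<open>A largest gap p with p - g in the semigroup is pseudo-Frobenius.\<close>
lemma PF_above_gap:
  assumes pos: "\<forall>i<length as. 0 < as ! i" and gcd: "Gcd (set as) = 1"
    and g: "g \<notin> sgp as"
  shows "\<exists>p\<in>PF as. p - g \<in> sgp as"
proof -
  let ?P = "\<lambda>p. p \<notin> sgp as \<and> p - g \<in> sgp as"
  have "?P g" using g by simp
  moreover have "?P p \<Longrightarrow> p \<le> frob as" for p using gt_frob_in_sgp[OF gcd] by force
  ultimately obtain p where p: "?P p" and greatest: "\<And>z. ?P z \<Longrightarrow> z \<le> p"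
    using int_bounded_greatest[of ?P g "frob as"] by blast
  have "p + int (as ! i) \<in> sgp as" if i: "i < length as" for i
  proof (rule ccontr)
    assume "p + int (as ! i) \<notin> sgp as"
    moreover have "p + int (as ! i) - g \<in> sgp as"
      using sgp_add[OF conjunct2[OF p] sgp_nth[OF i]] by (simp add: algebra_simps)
    ultimately have "p + int (as ! i) \<le> p" by (rule greatest[OF conjI])
    then show False using pos i by fastforce
  qed
  then have "p \<in> PF as" using p by (simp add: PF_def)
  then show ?thesis using p by blast
qed

locale type_two_semigroup =
  fixes as :: "nat list" and c :: int
  assumes pos: "\<forall>i<length as. 0 < as ! i"
    and gcd: "Gcd (set as) = 1"
    and type2: "card (PF as) = 2"
    and c_PF: "c \<in> PF as"
    and c_less_frob: "c < frob as"
begin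

definition a :: int where "a = frob as - c"

lemma a_pos: "0 < a"
  using c_less_frob by (simp add: a_def)

lemma PF_eq: "PF as = {c, frob as}"
  using card_2_eq_doubleton[OF type2 c_PF frob_in_PF[OF pos gcd]] c_less_frob by simp

lemma a_notin_sgp: "a \<notin> sgp as"
proof
  assume "a \<in> sgp as"
  then have "c + a \<in> sgp as" using PF_plus_sgp[OF c_PF] a_pos by (metis less_irrefl)
  then show False using frob_notin_sgp[OF gcd] by (simp add: a_def)
qed

lemma Kvals_eq: "Kvals as = sgp as \<union> (+) a ` sgp as"
  unfolding Kvals_def PF_eq a_def by auto

lemma Kvals_iff: "x \<in> Kvals as \<longleftrightarrow> frob as - x \<notin> sgp as"
proof
  assume "x \<in> Kvals as"
  then consider "x \<in> sgp as" | h where "h \<in> sgp as" "x = a + h"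
    unfolding Kvals_eq by auto
  then show "frob as - x \<notin> sgp as"
  proof cases
    case 1
    then show ?thesis using frob_notin_sgp[OF gcd] sgp_add[of x as] by force
  next
    case 2
    then have "h + (frob as - x) = c" by (simp add: a_def)
    then show ?thesis using c_PF sgp_add[OF \<open>h \<in> sgp as\<close>] by (force simp: PF_def)
  qed
next
  assume "frob as - x \<notin> sgp as"
  then obtain p where "p \<in> {c, frob as}" "p - (frob as - x) \<in> sgp as"
    using PF_above_gap[OF pos gcd] PF_eq by blast
  then have "x - a \<in> sgp as \<or> x \<in> sgp as" by (auto simp: a_def algebra_simps)
  then show "x \<in> Kvals as" unfolding Kvals_eq by (force simp: image_iff)
qed

lemma sgp_subset_Kvals: "sgp as \<subseteq> Kvals as"
  by (simp add: Kvals_eq)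

lemma Kvals_subset_Svals: "Kvals as \<subseteq> Svals as"
  by (auto simp: Svals_def gen_monoid_base)

lemma two_a_plus_sgp_in_Svals:
  assumes "h \<in> sgp as"
  shows "2 * a + h \<in> Svals as"
proof -
  have "a \<in> Svals as" "a + h \<in> Svals as"
    using assms Kvals_subset_Svals by (auto simp: Kvals_eq image_iff intro: exI[of _ 0])
  then have "a + (a + h) \<in> Svals as" unfolding Svals_def by (rule gen_monoid_add)
  then show ?thesis by (simp add: algebra_simps)
qed

lemma three_a_in_Svals: "3 * a \<in> Svals as"
proof -
  have "a \<in> Svals as" using Kvals_subset_Svals by (auto simp: Kvals_eq image_iff)
  moreover have "2 * a \<in> Svals as" using two_a_plus_sgp_in_Svals[OF sgp_zero] by simp
  ultimately have "2 * a + a \<in> Svals as" unfolding Svals_def by (rule gen_monoid_add[rotated])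
  then show ?thesis by (simp add: algebra_simps)
qed

lemma Svals_subset_multiples:
  assumes "int n * a \<in> sgp as" "2 \<le> n"
  shows "Svals as \<subseteq> {int k * a + u |k u. k < n \<and> u \<in> sgp as}"
  unfolding Svals_def
proof (rule gen_monoid_least)
  let ?T = "{int k * a + u |k u. k < n \<and> u \<in> sgp as}"
  have mem: "int k * a + u \<in> ?T" if "k < n" "u \<in> sgp as" for k u
    using that by blast
  show "0 \<in> ?T" using mem[of 0 0] assms(2) by simp
  show "Kvals as \<subseteq> ?T"
    using mem[of 0] mem[of 1] assms(2) by (auto simp: Kvals_eq)
  fix x y assume "x \<in> ?T" "y \<in> ?T"
  then obtain k l u v where kl: "k < n" "l < n" and uv: "u \<in> sgp as" "v \<in> sgp as"
    and "x = int k * a + u" "y = int l * a + v"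
    by blast
  then have xy: "x + y = int (k + l) * a + (u + v)" by (simp add: algebra_simps)
  show "x + y \<in> ?T"
  proof (cases "k + l < n")
    case True
    then show ?thesis using xy uv sgp_add by blast
  next
    case False
    then have "x + y = int (k + l - n) * a + (int n * a + (u + v))"
      using xy by (simp add: of_nat_diff algebra_simps)
    moreover have "int n * a + (u + v) \<in> sgp as" using assms(1) uv by (simp add: sgp_add)
    moreover have "k + l - n < n" using kl by simp
    ultimately show ?thesis by blast
  qed
qed

lemma Svals_eq_Kvals:
  assumes "2 * a \<in> sgp as"
  shows "Svals as = Kvals as"
proof
  have "x \<in> Kvals as" if x: "x \<in> {int k * a + u |k u. k < 2 \<and> u \<in> sgp as}" for x
  proof -
    obtain k u where "k < 2" "u \<in> sgp as" "x = int k * a + u" using x by blast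
    then have "x = u \<or> x = a + u" by (auto simp: less_2_cases_iff)
    then show ?thesis using \<open>u \<in> sgp as\<close> by (auto simp: Kvals_eq)
  qed
  moreover have "Svals as \<subseteq> {int k * a + u |k u. k < 2 \<and> u \<in> sgp as}"
    using Svals_subset_multiples[of 2] assms by simp
  ultimately show "Svals as \<subseteq> Kvals as" by blast
qed (rule Kvals_subset_Svals)

lemma in_Svals_diff_KvalsI:
  assumes "x - 2 * a \<in> sgp as" "frob as - x \<in> sgp as"
  shows "x \<in> Svals as - Kvals as"
proof -
  have "2 * a + (x - 2 * a) \<in> Svals as" using assms(1) by (rule two_a_plus_sgp_in_Svals)
  moreover have "x \<notin> Kvals as" using assms(2) by (simp add: Kvals_iff)
  ultimately show ?thesis by simp
qed

lemma Svals_diff_Kvals: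
  assumes "3 * a \<in> sgp as"
  shows "Svals as - Kvals as = {x. x - 2 * a \<in> sgp as \<and> frob as - x \<in> sgp as}"
proof
  show "Svals as - Kvals as \<subseteq> {x. x - 2 * a \<in> sgp as \<and> frob as - x \<in> sgp as}"
  proof
    fix x assume x: "x \<in> Svals as - Kvals as"
    then obtain k u where k: "k < 3" and u: "u \<in> sgp as" and x_eq: "x = int k * a + u"
      using Svals_subset_multiples[of 3] assms by auto
    have "k \<noteq> 0" "k \<noteq> 1" using x u x_eq by (auto simp: Kvals_eq)
    then have "x - 2 * a = u" using k x_eq by (simp add: numeral_3_eq_3 less_Suc_eq)
    then show "x \<in> {x. x - 2 * a \<in> sgp as \<and> frob as - x \<in> sgp as}"
      using x u Kvals_iff by simp
  qed
qed (use in_Svals_diff_KvalsI in blast)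

lemma two_AGL_frob_minus_two_a:
  assumes "two_AGL as"
  shows "frob as - 2 * a \<in> sgp as"
proof (rule ccontr)
  assume "frob as - 2 * a \<notin> sgp as"
  then have "2 * a \<in> Kvals as" by (simp add: Kvals_iff)
  then have "2 * a \<in> sgp as" using a_notin_sgp by (auto simp: Kvals_eq)
  then show False using assms Svals_eq_Kvals by (simp add: two_AGL_def)
qed

lemma two_AGL_Svals_diff_Kvals:
  assumes "two_AGL as"
  shows "Svals as - Kvals as = {2 * a, frob as}"
proof -
  have card: "card (Svals as - Kvals as) = 2" using assms by (simp add: two_AGL_def)
  have b: "frob as - 2 * a \<in> sgp as" using two_AGL_frob_minus_two_a[OF assms] .
  have two_a: "2 * a \<in> Svals as - Kvals as" and frob: "frob as \<in> Svals as - Kvals as"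
    using b in_Svals_diff_KvalsI[of "2 * a"] in_Svals_diff_KvalsI[of "frob as"] by simp_all
  have "frob as \<noteq> 2 * a"
  proof
    assume frob_eq: "frob as = 2 * a"
    then have "3 * a \<in> sgp as" using gt_frob_in_sgp[OF gcd] a_pos by simp
    have "x = 2 * a" if "x \<in> Svals as - Kvals as" for x
    proof -
      have "x - 2 * a \<in> sgp as" "2 * a - x \<in> sgp as"
        using that Svals_diff_Kvals[OF \<open>3 * a \<in> sgp as\<close>] frob_eq by auto
      then show ?thesis using sgp_nonneg[of "x - 2 * a" as] sgp_nonneg[of "2 * a - x" as] by simp
    qed
    then have "Svals as - Kvals as \<subseteq> {2 * a}" by blast
    then have "card (Svals as - Kvals as) \<le> 1" using card_mono[of "{2 * a}"] by simp
    then show False using card by simp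
  qed
  then show ?thesis using card_2_eq_doubleton[OF card two_a frob] by simp
qed

lemma two_AGLD:
  assumes "two_AGL as"
  shows "3 * a \<in> sgp as \<and> (\<exists>i<length as. frob as = 2 * a + int (as ! i))"
proof -
  define b where "b = frob as - 2 * a"
  have b: "b \<in> sgp as" using two_AGL_frob_minus_two_a[OF assms] by (simp add: b_def)
  have D: "Svals as - Kvals as = {2 * a, frob as}" using two_AGL_Svals_diff_Kvals[OF assms] .
  have "b \<noteq> 0" using assms D by (auto simp: two_AGL_def b_def)
  have "h = 0 \<or> h = b" if "h \<in> sgp as" "b - h \<in> sgp as" for h
  proof -
    have "2 * a + h \<in> Svals as - Kvals as"
      using that by (intro in_Svals_diff_KvalsI) (simp_all add: b_def algebra_simps)
    then show ?thesis using D by (auto simp: b_def)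
  qed
  then obtain i where i: "i < length as" "b = int (as ! i)"
    using irreducible_in_sgp_is_nth[OF pos b \<open>b \<noteq> 0\<close>] by blast
  have "3 * a \<in> sgp as"
  proof (rule ccontr)
    assume "3 * a \<notin> sgp as"
    moreover have "2 * a \<notin> sgp as" using D sgp_subset_Kvals by blast
    ultimately have "3 * a \<notin> Kvals as" by (auto simp: Kvals_eq)
    then have "3 * a \<in> {2 * a, frob as}" using D three_a_in_Svals by blast
    moreover have "3 * a \<noteq> frob as"
    proof
      assume "3 * a = frob as"
      then have "b = a" by (simp add: b_def)
      then show False using b a_notin_sgp by simp
    qed
    ultimately show False using a_pos by simp
  qed
  moreover have "frob as = 2 * a + int (as ! i)" using i(2) by (simp add: b_def)
  ultimately show ?thesis using i(1) by blast
qed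

lemma two_AGLI:
  assumes i: "i < length as"
    and minimal: "int (as ! i) \<notin> sgp (take i as @ drop (Suc i) as)"
    and three_a: "3 * a \<in> sgp as"
    and frob: "frob as = 2 * a + int (as ! i)"
  shows "two_AGL as"
proof -
  have "Svals as - Kvals as = {2 * a, frob as}"
  proof (intro equalityI subsetI)
    fix x assume "x \<in> Svals as - Kvals as"
    then have "x - 2 * a \<in> sgp as" "int (as ! i) - (x - 2 * a) \<in> sgp as"
      using Svals_diff_Kvals[OF three_a] frob by (simp_all add: algebra_simps)
    then have "x - 2 * a = 0 \<or> x - 2 * a = int (as ! i)"
      by (rule minimal_nth_irreducible[OF i minimal])
    then show "x \<in> {2 * a, frob as}" using frob by auto
  next
    fix x assume "x \<in> {2 * a, frob as}"
    then show "x \<in> Svals as - Kvals as"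
      using in_Svals_diff_KvalsI sgp_nth[OF i] frob by auto
  qed
  moreover have "2 * a \<noteq> frob as" using pos i frob by simp
  ultimately show ?thesis by (simp add: two_AGL_def)
qed

end

theorem theorem6p2:
  fixes as :: "nat list" and c :: int
  assumes pos: "\<forall>i<length as. 0 < as ! i"
    and gcd1: "Gcd (set as) = 1"
    and len: "length as \<ge> 3"
    and minimal: "\<forall>j<length as.
        int (as ! j) \<notin> sgp (take j as @ drop (Suc j) as)"
    and type2: "card (PF as) = 2"
    and cPF: "c \<in> PF as"
    and cf: "c < frob as"
  shows "two_AGL as \<longleftrightarrow>
           3 * (frob as - c) \<in> sgp as \<and>
           (\<exists>i<length as. frob as = 2 * (frob as - c) + int (as ! i))"
proof -
  interpret type_two_semigroup as c using pos gcd1 type2 cPF cf by unfold_locales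
  have "two_AGL as \<longleftrightarrow> 3 * a \<in> sgp as \<and> (\<exists>i<length as. frob as = 2 * a + int (as ! i))"
    using two_AGLD two_AGLI minimal by blast
  then show ?thesis unfolding a_def .
qed

end
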